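(* Let $n=2k+1$ be odd with $k\ge1$, $\theta=\frac{2\pi}{n+2}$, and for $L>0$ let $\mathcal{N}^{(L)}=\{(\ell_j,r_j): j\in[1:n]\}$ be given by $\ell_n=L$, $r_n=1$, and $$\ell_{2i-1}=\ell_{2i}=\frac{2\sin\theta\,\sin(i\theta)}{\cos(i\theta)-\cos((i+1)\theta)},\qquad r_{2i-1}=r_{2i}=\frac{2\sin\theta\,\sin(i\theta)}{\cos((i-1)\theta)-\cos(i\theta)},\qquad i\in[1:k].$$ Then $\mathsf{C}_1(\mathcal{N}_j)=1$ for all $j\in[1:n-1]$, $\mathsf{C}_1(\mathcal{N}^{(L)})=1$ for every $L>0$, $\mathsf{C}_n(\mathcal{N}^{(L)})\le r_1=2+2\cos\theta$ for every $L>0$, and $\lim_{L\to\infty}\mathsf{C}_n(\mathcal{N}^{(L)})=2+2\cos\theta$. Hence $\lim_{L\to\infty}\frac{\mathsf{C}_1(\mathcal{N}^{(L)})}{\mathsf{C}_n(\mathcal{N}^{(L)})}=\frac{1}{2+2\cos\left(\frac{2\pi}{n+2}\right)}$.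
   Context: For a network $\mathcal{N}=\{(\ell_i,r_i): i\in[1:n]\}$ with nonnegative link capacities, with complements inside $[1:n]$ and maxima over empty sets equal to $0$, the approximate capacity is $\mathsf{C}_n(\mathcal{N})=\max_{\boldsymbol\lambda}\min_{\Omega\subseteq[1:n]}\sum_{\mathcal{S}\subseteq[1:n]}\lambda_{\mathcal{S}}\big(\max_{i\in\mathcal{S}^c\cap\Omega^c}\ell_i+\max_{i\in\mathcal{S}\cap\Omega}r_i\big)$, the maximum being over schedules $\boldsymbol\lambda=(\lambda_{\mathcal{S}})_{\mathcal{S}\subseteq[1:n]}$, $\lambda_{\mathcal{S}}\ge0$, $\sum_{\mathcal{S}}\lambda_{\mathcal{S}}=1$. $\mathsf{C}_1(\mathcal{N}_i)=\frac{\ell_ir_i}{\ell_i+r_i}$ and $\mathsf{C}_1(\mathcal{N})=\max_i\mathsf{C}_1(\mathcal{N}_i)$. *)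

theory Defs
  imports "HOL-Analysis.Analysis"
begin

definition maxz :: "real set \<Rightarrow> real" where
  "maxz A = (if A = {} then 0 else Max A)"

text \<open>A network on [1:n] is given by link capacities l, r :: nat \<Rightarrow> real (only indices 1..n matter).
  A schedule assigns a weight to every subset of [1:n].\<close>
definition schedule :: "nat \<Rightarrow> (nat set \<Rightarrow> real) \<Rightarrow> bool" where
  "schedule n lam \<longleftrightarrow> (\<forall>S\<in>Pow {1..n}. lam S \<ge> 0) \<and> (\<Sum>S\<in>Pow {1..n}. lam S) = 1"

definition cut_value ::
  "nat \<Rightarrow> (nat \<Rightarrow> real) \<Rightarrow> (nat \<Rightarrow> real) \<Rightarrow> (nat set \<Rightarrow> real) \<Rightarrow> nat set \<Rightarrow> real" where
  "cut_value n l r lam \<Omega> =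
     (\<Sum>S\<in>Pow {1..n}. lam S *
        (maxz (l ` (({1..n} - S) \<inter> ({1..n} - \<Omega>))) + maxz (r ` (S \<inter> \<Omega>))))"

text \<open>Approximate capacity C_n: max over schedules of min over cuts (the max is attained,
  so it equals the supremum used here).\<close>
definition Cn :: "nat \<Rightarrow> (nat \<Rightarrow> real) \<Rightarrow> (nat \<Rightarrow> real) \<Rightarrow> real" where
  "Cn n l r = Sup {Min ((\<lambda>\<Omega>. cut_value n l r lam \<Omega>) ` Pow {1..n}) | lam. schedule n lam}"

definition C1_link :: "real \<Rightarrow> real \<Rightarrow> real" where
  "C1_link a b = a * b / (a + b)"

definition C1 :: "nat \<Rightarrow> (nat \<Rightarrow> real) \<Rightarrow> (nat \<Rightarrow> real) \<Rightarrow> real" where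
  "C1 n l r = Max ((\<lambda>i. C1_link (l i) (r i)) ` {1..n})"

text \<open>The network N^(L) with n = 2k+1, theta = 2 pi/(n+2); for j in [1:n-1], i = (j+1) div 2
  (so j = 2i-1 or j = 2i).\<close>
definition thetaN :: "nat \<Rightarrow> real" where
  "thetaN k = 2 * pi / (real (2*k+1) + 2)"

definition netL :: "nat \<Rightarrow> real \<Rightarrow> nat \<Rightarrow> real" where
  "netL k L j = (if j = 2*k+1 then L else
     (let \<theta> = thetaN k; i = real ((j+1) div 2) in
       2 * sin \<theta> * sin (i*\<theta>) / (cos (i*\<theta>) - cos ((i+1)*\<theta>))))"

definition netR :: "nat \<Rightarrow> nat \<Rightarrow> real" where
  "netR k j = (if j = 2*k+1 then 1 else
     (let \<theta> = thetaN k; i = real ((j+1) div 2) in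
       2 * sin \<theta> * sin (i*\<theta>) / (cos ((i-1)*\<theta>) - cos (i*\<theta>))))"

end

theory Submission
  imports Defs "HOL-Real_Asymp.Real_Asymp"
begin

text \<open>Write \<open>l i\<close>, \<open>r i\<close> for the capacities of the relay pair \<open>i\<close> (links \<open>2i-1\<close> and \<open>2i\<close>) and
  \<open>\<rho> = 2 + 2 cos \<theta>\<close>. The capacities are chosen so that \<open>l (i-1) + r i = \<rho>\<close> (with \<open>l 0 = 0\<close>),
  \<open>C\<^sub>1 (l i, r i) = 1\<close>, and \<open>r (k+1) = 1\<close> matches the direct link \<open>n\<close>; thus \<open>r 1 = \<rho>\<close>.
  For the upper bound, the cut \<open>\<Omega> = [1:n]\<close> costs every schedule at most \<open>max r = \<rho>\<close>.
  For the lower bound, put weight \<open>(1 - d)/2\<close> on the state of odd links, the same on the state of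
  even links together with \<open>n\<close>, and \<open>d = \<rho> / L\<close> on the empty state. A cut avoiding \<open>n\<close> pays
  \<open>d L = \<rho>\<close> in the empty state. A cut containing \<open>n\<close> contains a first link of the odd chain
  \<open>1, 3, \<dots>, n\<close>, and of the even chain \<open>2, 4, \<dots>, 2k, n\<close>; its predecessor in the chain lies outside
  the cut and outside the other state, so the two relay states together pay \<open>l (i-1) + r i = \<rho>\<close>
  per chain. Hence \<open>\<rho> - \<rho>\<^sup>2 / L \<le> C\<^sub>n \<le> \<rho>\<close>.\<close>

section \<open>Relay capacities\<close>

lemma sin_sum_div_cos_diff:
  fixes x t :: real
  assumes "cos x \<noteq> cos (x + t)"
  shows "2 * sin t * (sin x + sin (x + t)) / (cos x - cos (x + t)) = 2 + 2 * cos t"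
proof -
  have "2 * sin t * (sin x + sin (x + t)) = (2 + 2 * cos t) * (cos x - cos (x + t))"
    using sin_cos_squared_add[of t] unfolding sin_add cos_add by algebra
  then show ?thesis using assms by simp
qed

lemma C1_link_divide:
  assumes "0 < a" "0 < b" "0 < s"
  shows "C1_link (s / a) (s / b) = s / (a + b)"
proof -
  have "a * s + b * s \<noteq> 0" using assms by (metis add_pos_pos mult_pos_pos less_irrefl)
  then show ?thesis using assms by (simp add: C1_link_def field_simps)
qed

definition lcap :: "real \<Rightarrow> nat \<Rightarrow> real" where
  "lcap \<theta> i = 2 * sin \<theta> * sin (real i * \<theta>) / (cos (real i * \<theta>) - cos ((real i + 1) * \<theta>))"

definition rcap :: "real \<Rightarrow> nat \<Rightarrow> real" where
  "rcap \<theta> i = 2 * sin \<theta> * sin (real i * \<theta>) / (cos ((real i - 1) * \<theta>) - cos (real i * \<theta>))"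

lemma lcap_0 [simp]: "lcap \<theta> 0 = 0"
  by (simp add: lcap_def)

lemma lcap_add_rcap_Suc:
  assumes "cos (real i * \<theta>) \<noteq> cos ((real i + 1) * \<theta>)"
  shows "lcap \<theta> i + rcap \<theta> (Suc i) = 2 + 2 * cos \<theta>"
proof -
  let ?x = "real i * \<theta>"
  have "lcap \<theta> i + rcap \<theta> (Suc i) = 2 * sin \<theta> * (sin ?x + sin (?x + \<theta>)) / (cos ?x - cos (?x + \<theta>))"
  proof -
    have "(real (Suc i) - 1) * \<theta> = ?x" "real (Suc i) * \<theta> = ?x + \<theta>" "(real i + 1) * \<theta> = ?x + \<theta>"
      by (simp_all add: distrib_right)
    then show ?thesis unfolding lcap_def rcap_def by (simp add: add_divide_distrib distrib_left)
  qed
  also have "\<dots> = 2 + 2 * cos \<theta>"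
    using assms by (intro sin_sum_div_cos_diff) (simp add: distrib_right)
  finally show ?thesis .
qed

lemma rcap_1:
  assumes "cos \<theta> \<noteq> 1"
  shows "rcap \<theta> 1 = 2 + 2 * cos \<theta>"
  using lcap_add_rcap_Suc[of 0 \<theta>] assms by simp

lemma cos_mult_less:
  assumes "0 < \<theta>" "i < j" "real j * \<theta> \<le> pi"
  shows "cos (real j * \<theta>) < cos (real i * \<theta>)"
  using assms by (intro cos_monotone_0_pi) auto

lemma sin_mult_pos:
  assumes "0 < \<theta>" "1 \<le> j" "j \<le> i" "real i * \<theta> < pi"
  shows "0 < sin (real j * \<theta>)"
proof (rule sin_gt_zero)
  have "real j * \<theta> \<le> real i * \<theta>"
    using assms by (intro mult_right_mono) auto
  then show "real j * \<theta> < pi" using assms by linarith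
qed (use assms in simp)

lemma lcap_nonneg:
  assumes "0 < \<theta>" "real (Suc i) * \<theta> \<le> pi"
  shows "0 \<le> lcap \<theta> i"
proof (cases "i = 0")
  case False
  have "real i * \<theta> < pi"
    using assms by (simp add: distrib_right)
  then have "0 < sin \<theta>" "0 < sin (real i * \<theta>)"
    using assms False sin_mult_pos[of \<theta> 1 i] sin_mult_pos[of \<theta> i i] by simp_all
  moreover have "cos ((real i + 1) * \<theta>) < cos (real i * \<theta>)"
    using cos_mult_less[of \<theta> i "Suc i"] assms by (simp add: add.commute)
  ultimately show ?thesis unfolding lcap_def by simp
qed simp

lemma rcap_pos:
  assumes "0 < \<theta>" "1 \<le> i" "real i * \<theta> < pi"
  shows "0 < rcap \<theta> i"
proof -
  have "0 < sin \<theta>" "0 < sin (real i * \<theta>)"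
    using assms sin_mult_pos[of \<theta> 1 i] sin_mult_pos[of \<theta> i i] by simp_all
  moreover have "cos (real i * \<theta>) < cos ((real i - 1) * \<theta>)"
    using cos_mult_less[of \<theta> "i - 1" i] assms by (simp add: of_nat_diff)
  ultimately show ?thesis unfolding rcap_def by simp
qed

lemma rcap_le:
  assumes "0 < \<theta>" "1 \<le> i" "real i * \<theta> \<le> pi"
  shows "rcap \<theta> i \<le> 2 + 2 * cos \<theta>"
proof -
  have i: "Suc (i - 1) = i" using assms by simp
  have "cos (real i * \<theta>) < cos (real (i - 1) * \<theta>)"
    using cos_mult_less[of \<theta> "i - 1" i] assms by simp
  then have "lcap \<theta> (i - 1) + rcap \<theta> i = 2 + 2 * cos \<theta>"
    using lcap_add_rcap_Suc[of "i - 1" \<theta>] assms by (simp add: i of_nat_diff)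
  moreover have "0 \<le> lcap \<theta> (i - 1)"
    using lcap_nonneg[of \<theta> "i - 1"] assms by (simp add: i)
  ultimately show ?thesis by linarith
qed

lemma C1_link_lcap_rcap:
  assumes "0 < \<theta>" "1 \<le> i" "real (Suc i) * \<theta> \<le> pi"
  shows "C1_link (lcap \<theta> i) (rcap \<theta> i) = 1"
proof -
  define s where "s = 2 * sin \<theta> * sin (real i * \<theta>)"
  define a where "a = cos (real i * \<theta>) - cos ((real i + 1) * \<theta>)"
  define b where "b = cos ((real i - 1) * \<theta>) - cos (real i * \<theta>)"
  have "real i * \<theta> \<le> pi"
    using assms by (simp add: distrib_right)
  then have "0 < b"
    using cos_mult_less[of \<theta> "i - 1" i] assms by (simp add: b_def of_nat_diff)
  moreover have "0 < a"
    using cos_mult_less[of \<theta> i "Suc i"] assms by (simp add: a_def add.commute)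
  moreover have "a + b = s"
    using sin_times_sin[of "real i * \<theta>" \<theta>] by (simp add: a_def b_def s_def algebra_simps)
  ultimately have "C1_link (s / a) (s / b) = 1"
    by (simp add: C1_link_divide)
  then show ?thesis by (simp add: lcap_def rcap_def s_def a_def b_def)
qed

lemma thetaN_pos: "0 < thetaN k"
  by (simp add: thetaN_def)

lemma thetaN_eq: "(2 * real k + 3) * thetaN k = 2 * pi"
  by (simp add: thetaN_def add.commute)

lemma mult_thetaN_less_pi:
  assumes "i \<le> Suc k"
  shows "real i * thetaN k < pi"
proof -
  have "real i * thetaN k \<le> real (Suc k) * thetaN k"
    using assms thetaN_pos[of k] by (intro mult_right_mono) auto
  also have "\<dots> < pi"
    using thetaN_eq[of k] thetaN_pos[of k] by (simp add: algebra_simps)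
  finally show ?thesis .
qed

lemma rcap_thetaN_Suc: "rcap (thetaN k) (Suc k) = 1"
proof -
  let ?\<theta> = "thetaN k" and ?x = "real (Suc k) * thetaN k"
  have "cos (?x + ?\<theta>) = cos ?x"
  proof -
    have "?x + ?\<theta> = 2 * pi - ?x"
      using thetaN_eq[of k] by (simp add: algebra_simps)
    then show ?thesis by (metis cos_2pi_minus)
  qed
  then have "cos (real k * ?\<theta>) - cos ?x = 2 * sin ?x * sin ?\<theta>"
    using sin_times_sin[of ?x ?\<theta>] by (simp add: algebra_simps)
  moreover have "0 < sin ?\<theta>" "0 < sin ?x"
    using sin_mult_pos[of ?\<theta> 1 "Suc k"] sin_mult_pos[of ?\<theta> "Suc k" "Suc k"]
      thetaN_pos[of k] mult_thetaN_less_pi[of "Suc k" k] by simp_all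
  ultimately show ?thesis by (simp add: rcap_def)
qed

lemma lcap_add_rcap_thetaN:
  assumes "1 \<le> i" "i \<le> Suc k"
  shows "lcap (thetaN k) (i - 1) + rcap (thetaN k) i = 2 + 2 * cos (thetaN k)"
proof -
  have "cos (real i * thetaN k) < cos (real (i - 1) * thetaN k)"
    using cos_mult_less[of "thetaN k" "i - 1" i] assms thetaN_pos[of k]
      mult_thetaN_less_pi[of i k] by simp
  then show ?thesis
    using lcap_add_rcap_Suc[of "i - 1" "thetaN k"] assms by (simp add: of_nat_diff)
qed

section \<open>Cut values of schedules\<close>

lemma maxz_upper: "finite A \<Longrightarrow> x \<in> A \<Longrightarrow> x \<le> maxz A"
  by (auto simp: maxz_def)

lemma maxz_nonneg: "finite A \<Longrightarrow> (\<And>x. x \<in> A \<Longrightarrow> 0 \<le> x) \<Longrightarrow> 0 \<le> maxz A"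
  by (auto simp: maxz_def Max_ge_iff)

lemma maxz_least: "finite A \<Longrightarrow> (\<And>x. x \<in> A \<Longrightarrow> x \<le> c) \<Longrightarrow> 0 \<le> c \<Longrightarrow> maxz A \<le> c"
  by (auto simp: maxz_def)

definition state_cut :: "nat \<Rightarrow> (nat \<Rightarrow> real) \<Rightarrow> (nat \<Rightarrow> real) \<Rightarrow> nat set \<Rightarrow> nat set \<Rightarrow> real" where
  "state_cut n l r S \<Omega> = maxz (l ` (({1..n} - S) \<inter> ({1..n} - \<Omega>))) + maxz (r ` (S \<inter> \<Omega>))"

lemma cut_value_eq_sum_state_cut:
  "cut_value n l r lam \<Omega> = (\<Sum>S\<in>Pow {1..n}. lam S * state_cut n l r S \<Omega>)"
  by (simp add: cut_value_def state_cut_def)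

lemma state_cut_nonneg:
  assumes "\<And>i. i \<in> {1..n} \<Longrightarrow> 0 \<le> l i" "\<And>i. i \<in> {1..n} \<Longrightarrow> 0 \<le> r i" "S \<subseteq> {1..n}"
  shows "0 \<le> state_cut n l r S \<Omega>"
proof -
  have "finite (S \<inter> \<Omega>)" using assms(3) finite_subset by blast
  then show ?thesis unfolding state_cut_def using assms
    by (intro add_nonneg_nonneg maxz_nonneg) auto
qed

lemma schedule_point_mass: "schedule n (\<lambda>S. if S = {} then 1 else 0)"
  by (simp add: schedule_def)

lemma min_cut_le_max_right:
  assumes "schedule n lam" "\<And>i. i \<in> {1..n} \<Longrightarrow> 0 \<le> r i"
  shows "Min ((\<lambda>\<Omega>. cut_value n l r lam \<Omega>) ` Pow {1..n}) \<le> maxz (r ` {1..n})"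
proof -
  let ?U = "{1..n}" and ?M = "maxz (r ` {1..n})"
  have "Min ((\<lambda>\<Omega>. cut_value n l r lam \<Omega>) ` Pow ?U) \<le> cut_value n l r lam ?U"
    by (rule Min_le) auto
  also have "\<dots> \<le> (\<Sum>S\<in>Pow ?U. lam S * ?M)"
    unfolding cut_value_eq_sum_state_cut
  proof (rule sum_mono)
    fix S assume S: "S \<in> Pow ?U"
    have "0 \<le> ?M" using assms(2) by (intro maxz_nonneg) auto
    then have "maxz (r ` S) \<le> ?M"
      using S by (intro maxz_least) (auto intro!: maxz_upper intro: finite_subset)
    moreover have "0 \<le> lam S" using assms(1) S by (simp add: schedule_def)
    moreover have "state_cut n l r S ?U = maxz (r ` S)"
      using S by (auto simp: state_cut_def maxz_def Int_absorb2)
    ultimately show "lam S * state_cut n l r S ?U \<le> lam S * ?M"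
      by (simp add: mult_left_mono)
  qed
  also have "\<dots> = ?M"
    using assms(1) by (simp add: schedule_def sum_distrib_right[symmetric])
  finally show ?thesis .
qed

lemma Cn_le_max_right:
  assumes "\<And>i. i \<in> {1..n} \<Longrightarrow> 0 \<le> r i"
  shows "Cn n l r \<le> maxz (r ` {1..n})"
  unfolding Cn_def
  by (rule cSup_least) (use schedule_point_mass min_cut_le_max_right assms in auto)

lemma Cn_ge:
  assumes "schedule n lam" "\<And>i. i \<in> {1..n} \<Longrightarrow> 0 \<le> r i"
    and "\<And>\<Omega>. \<Omega> \<subseteq> {1..n} \<Longrightarrow> c \<le> cut_value n l r lam \<Omega>"
  shows "c \<le> Cn n l r"
proof -
  let ?min = "\<lambda>lam. Min ((\<lambda>\<Omega>. cut_value n l r lam \<Omega>) ` Pow {1..n})"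
  have "c \<le> ?min lam"
    using assms(3) by (intro Min.boundedI) auto
  also have "?min lam \<le> Cn n l r"
    unfolding Cn_def
  proof (rule cSup_upper)
    show "?min lam \<in> {?min lam | lam. schedule n lam}" using assms(1) by blast
    show "bdd_above {?min lam | lam. schedule n lam}"
      by (rule bdd_aboveI[where M = "maxz (r ` {1..n})"])
        (use min_cut_le_max_right[where r = r and l = l] assms(2) in auto)
  qed
  finally show ?thesis .
qed

definition odd_links :: "nat \<Rightarrow> nat set" where
  "odd_links n = {j \<in> {1..n}. odd j}"

definition even_links :: "nat \<Rightarrow> nat set" where
  "even_links n = insert n {j \<in> {1..n}. even j}"

lemma odd_links_subset: "odd_links n \<subseteq> {1..n}"
  by (auto simp: odd_links_def)

lemma even_links_subset: "1 \<le> n \<Longrightarrow> even_links n \<subseteq> {1..n}"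
  by (auto simp: even_links_def)

definition relay_schedule :: "nat \<Rightarrow> real \<Rightarrow> nat set \<Rightarrow> real" where
  "relay_schedule n d S =
     (if S = odd_links n then (1 - d) / 2 else 0) + (if S = even_links n then (1 - d) / 2 else 0)
     + (if S = {} then d else 0)"

lemma sum_relay_schedule:
  fixes h :: "nat set \<Rightarrow> real"
  assumes "1 \<le> n"
  shows "(\<Sum>S\<in>Pow {1..n}. relay_schedule n d S * h S) =
    (1 - d) / 2 * h (odd_links n) + (1 - d) / 2 * h (even_links n) + d * h {}"
proof -
  have "odd_links n \<in> Pow {1..n}" "even_links n \<in> Pow {1..n}"
    using odd_links_subset even_links_subset[OF assms] by auto
  moreover have "\<And>P a x. (if P then a else 0) * x = (if P then a * x else (0::real))"
    by simp
  ultimately show ?thesis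
    by (simp add: relay_schedule_def distrib_right sum.distrib sum.delta)
qed

lemma schedule_relay_schedule:
  assumes "1 \<le> n" "0 \<le> d" "d \<le> 1"
  shows "schedule n (relay_schedule n d)"
  using sum_relay_schedule[OF assms(1), of d "\<lambda>_. 1"] assms(2,3)
  by (simp add: schedule_def relay_schedule_def)

lemma cut_value_relay_schedule:
  assumes "1 \<le> n"
  shows "cut_value n l r (relay_schedule n d) \<Omega> =
    (1 - d) / 2 * state_cut n l r (odd_links n) \<Omega> + (1 - d) / 2 * state_cut n l r (even_links n) \<Omega>
    + d * state_cut n l r {} \<Omega>"
  unfolding cut_value_eq_sum_state_cut using assms by (rule sum_relay_schedule)

lemma chain_cut_bound:
  fixes c :: "nat \<Rightarrow> nat" and l r :: "nat \<Rightarrow> real"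
  assumes "X \<subseteq> {1..n}" "1 \<le> m" "c m \<in> \<Omega>"
    and chain: "\<And>i. 1 \<le> i \<Longrightarrow> i \<le> m \<Longrightarrow> c i \<in> X"
    and avoid: "\<And>i. 1 \<le> i \<Longrightarrow> i < m \<Longrightarrow> c i \<notin> Y"
    and l_nonneg: "\<And>i. i \<in> {1..n} \<Longrightarrow> 0 \<le> l i"
    and first: "\<rho> \<le> r (c 1)"
    and step: "\<And>i. 1 < i \<Longrightarrow> i \<le> m \<Longrightarrow> \<rho> \<le> l (c (i - 1)) + r (c i)"
  shows "\<rho> \<le> maxz (l ` (({1..n} - Y) \<inter> ({1..n} - \<Omega>))) + maxz (r ` (X \<inter> \<Omega>))"
proof -
  let ?lcut = "maxz (l ` (({1..n} - Y) \<inter> ({1..n} - \<Omega>)))"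
  define q where "q = (LEAST i. 1 \<le> i \<and> c i \<in> \<Omega>)"
  have q: "1 \<le> q" "c q \<in> \<Omega>"
    using LeastI[of "\<lambda>i. 1 \<le> i \<and> c i \<in> \<Omega>" m] assms(2,3) by (simp_all add: q_def)
  have "q \<le> m"
    using Least_le[of "\<lambda>i. 1 \<le> i \<and> c i \<in> \<Omega>" m] assms(2,3) by (simp add: q_def)
  have before_q: "c i \<notin> \<Omega>" if "1 \<le> i" "i < q" for i
    using not_less_Least[of i "\<lambda>i. 1 \<le> i \<and> c i \<in> \<Omega>"] that by (simp add: q_def)
  have finite: "finite (X \<inter> \<Omega>)"
    using assms(1) finite_subset by blast
  have "r (c q) \<le> maxz (r ` (X \<inter> \<Omega>))"
    using chain[of q] q \<open>q \<le> m\<close> finite by (intro maxz_upper) auto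
  moreover have "\<rho> \<le> ?lcut + r (c q)"
  proof (cases "q = 1")
    case True
    have "0 \<le> ?lcut" using l_nonneg by (intro maxz_nonneg) auto
    then show ?thesis using first True by simp
  next
    case False
    have "1 \<le> q - 1" "q - 1 < m" using False q \<open>q \<le> m\<close> by auto
    then have "c (q - 1) \<in> X" "c (q - 1) \<notin> Y" "c (q - 1) \<notin> \<Omega>"
      using chain avoid before_q by auto
    then have "c (q - 1) \<in> ({1..n} - Y) \<inter> ({1..n} - \<Omega>)"
      using assms(1) by auto
    then have "l (c (q - 1)) \<le> ?lcut" by (intro maxz_upper) auto
    then show ?thesis using step[of q] False q \<open>q \<le> m\<close> by simp
  qed
  ultimately show ?thesis by linarith
qed

section \<open>The networks \<open>netL k L\<close>, \<open>netR k\<close>\<close>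

lemma netL_eq: "j \<noteq> 2 * k + 1 \<Longrightarrow> netL k L j = lcap (thetaN k) ((j + 1) div 2)"
  by (simp add: netL_def lcap_def Let_def)

lemma netR_eq:
  assumes "j \<le> 2 * k + 1"
  shows "netR k j = rcap (thetaN k) ((j + 1) div 2)"
proof (cases "j = 2 * k + 1")
  case True
  then show ?thesis using rcap_thetaN_Suc[of k] by (simp add: netR_def)
qed (simp add: netR_def rcap_def Let_def)

lemma netL_nonneg:
  assumes "0 < L" "j \<le> 2 * k + 1"
  shows "0 \<le> netL k L j"
proof (cases "j = 2 * k + 1")
  case False
  then have "Suc ((j + 1) div 2) \<le> Suc k" using assms(2) by auto
  then show ?thesis
    using False lcap_nonneg[of "thetaN k" "(j + 1) div 2"] thetaN_pos[of k]
      mult_thetaN_less_pi[of "Suc ((j + 1) div 2)" k] by (simp add: netL_eq)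
qed (use assms in \<open>simp add: netL_def\<close>)

lemma netR_pos_le:
  assumes "1 \<le> j" "j \<le> 2 * k + 1"
  shows "0 < netR k j" "netR k j \<le> 2 + 2 * cos (thetaN k)"
proof -
  have i: "1 \<le> (j + 1) div 2" "(j + 1) div 2 \<le> Suc k" using assms by auto
  show "0 < netR k j"
    using rcap_pos[of "thetaN k"] thetaN_pos[of k] mult_thetaN_less_pi[OF i(2)] i assms(2)
    by (simp add: netR_eq)
  show "netR k j \<le> 2 + 2 * cos (thetaN k)"
    using rcap_le[of "thetaN k"] thetaN_pos[of k] mult_thetaN_less_pi[OF i(2)] i assms(2)
    by (simp add: netR_eq less_imp_le)
qed

lemma netR_1:
  assumes "1 \<le> k"
  shows "netR k 1 = 2 + 2 * cos (thetaN k)"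
proof -
  have "cos (thetaN k) < cos (real 0 * thetaN k)"
    using cos_mult_less[of "thetaN k" 0 1] thetaN_pos[of k] mult_thetaN_less_pi[of 1 k] by simp
  then show ?thesis using assms rcap_1[of "thetaN k"] by (simp add: netR_eq)
qed

lemma relay_state_cuts_ge:
  assumes "0 < L" "2 * k + 1 \<in> \<Omega>"
  shows "2 * (2 + 2 * cos (thetaN k)) \<le>
    state_cut (2 * k + 1) (netL k L) (netR k) (odd_links (2 * k + 1)) \<Omega>
    + state_cut (2 * k + 1) (netL k L) (netR k) (even_links (2 * k + 1)) \<Omega>"
proof -
  let ?n = "2 * k + 1" and ?\<rho> = "2 + 2 * cos (thetaN k)"
  let ?A = "odd_links ?n" and ?B = "even_links ?n"
  let ?lcut = "\<lambda>Y. maxz (netL k L ` (({1..?n} - Y) \<inter> ({1..?n} - \<Omega>)))"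
  let ?rcut = "\<lambda>X. maxz (netR k ` (X \<inter> \<Omega>))"
  have key: "?\<rho> \<le> lcap (thetaN k) (i - 1) + rcap (thetaN k) i" if "1 \<le> i" "i \<le> Suc k" for i
    using lcap_add_rcap_thetaN[OF that] by simp
  have l_nonneg: "\<And>j. j \<in> {1..?n} \<Longrightarrow> 0 \<le> netL k L j"
    using netL_nonneg[OF assms(1)] by simp
  have "?\<rho> \<le> ?lcut ?B + ?rcut ?A"
  proof (rule chain_cut_bound[where c = "\<lambda>i. 2 * i - 1" and m = "Suc k"])
    show "?\<rho> \<le> netR k (2 * 1 - 1)"
      using key[of 1] by (simp add: netR_eq)
    fix i assume "1 < i" "i \<le> Suc k"
    then show "?\<rho> \<le> netL k L (2 * (i - 1) - 1) + netR k (2 * i - 1)"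
      using key[of i] by (simp add: netL_eq netR_eq)
  qed (use assms l_nonneg in \<open>auto simp: odd_links_def even_links_def\<close>)
  moreover have "?\<rho> \<le> ?lcut ?A + ?rcut ?B"
  proof (rule chain_cut_bound[where c = "\<lambda>i. if i = Suc k then ?n else 2 * i" and m = "Suc k"])
    show "?\<rho> \<le> netR k (if 1 = Suc k then ?n else 2 * 1)"
      using key[of 1] by (auto simp: netR_eq)
    fix i assume "1 < i" "i \<le> Suc k"
    then show "?\<rho> \<le> netL k L (if i - 1 = Suc k then ?n else 2 * (i - 1))
        + netR k (if i = Suc k then ?n else 2 * i)"
      using key[of i] by (auto simp: netL_eq netR_eq)
  qed (use assms l_nonneg in \<open>auto simp: odd_links_def even_links_def\<close>)
  ultimately show ?thesis by (simp add: state_cut_def)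
qed

lemma Cn_netL_ge:
  assumes "1 \<le> k" "2 + 2 * cos (thetaN k) \<le> L"
  shows "(2 + 2 * cos (thetaN k)) - (2 + 2 * cos (thetaN k))\<^sup>2 / L \<le> Cn (2 * k + 1) (netL k L) (netR k)"
proof -
  let ?n = "2 * k + 1" and ?\<rho> = "2 + 2 * cos (thetaN k)"
  let ?cut = "state_cut ?n (netL k L) (netR k)"
  have "0 < ?\<rho>" using netR_pos_le(1)[of 1 k] netR_1[OF assms(1)] by simp
  then have L: "0 < L" using assms(2) by linarith
  define d where "d = ?\<rho> / L"
  have d: "0 \<le> d" "d \<le> 1" "d * L = ?\<rho>"
    using \<open>0 < ?\<rho>\<close> assms(2) L by (simp_all add: d_def)
  have nonneg: "\<And>i. i \<in> {1..?n} \<Longrightarrow> 0 \<le> netL k L i" "\<And>i. i \<in> {1..?n} \<Longrightarrow> 0 \<le> netR k i"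
    using netL_nonneg[OF L] netR_pos_le(1)[of _ k] by (auto intro: less_imp_le)
  have cut_nonneg: "0 \<le> ?cut S \<Omega>" if "S \<subseteq> {1..?n}" for S \<Omega>
    using state_cut_nonneg[OF nonneg that] .
  show ?thesis
  proof (rule Cn_ge[OF schedule_relay_schedule[OF _ d(1,2)]])
    fix \<Omega> assume "\<Omega> \<subseteq> {1..?n}"
    have "?\<rho> - ?\<rho>\<^sup>2 / L \<le> (1 - d) / 2 * ?cut (odd_links ?n) \<Omega> + (1 - d) / 2 * ?cut (even_links ?n) \<Omega>
      + d * ?cut {} \<Omega>"
    proof (cases "?n \<in> \<Omega>")
      case True
      have "(1 - d) * ?\<rho> = (1 - d) / 2 * (2 * ?\<rho>)" by simp
      also have "\<dots> \<le> (1 - d) / 2 * (?cut (odd_links ?n) \<Omega> + ?cut (even_links ?n) \<Omega>)"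
        using relay_state_cuts_ge[OF L True] d by (intro mult_left_mono) auto
      finally have "(1 - d) * ?\<rho> \<le> (1 - d) / 2 * ?cut (odd_links ?n) \<Omega> + (1 - d) / 2 * ?cut (even_links ?n) \<Omega>"
        by (simp only: distrib_left)
      moreover have "?\<rho> - ?\<rho>\<^sup>2 / L = (1 - d) * ?\<rho>"
        using L by (simp add: d_def power2_eq_square field_simps)
      moreover have "0 \<le> d * ?cut {} \<Omega>" using cut_nonneg[of "{}" \<Omega>] d by simp
      ultimately show ?thesis by linarith
    next
      case False
      have "L \<le> ?cut {} \<Omega>"
        using False maxz_upper[of "netL k L ` ({1..?n} \<inter> ({1..?n} - \<Omega>))" L]
        by (auto simp: state_cut_def maxz_def netL_def)
      then have "?\<rho> \<le> d * ?cut {} \<Omega>" using d by (metis mult_left_mono)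
      moreover have "0 \<le> (1 - d) / 2 * ?cut (odd_links ?n) \<Omega>" "0 \<le> (1 - d) / 2 * ?cut (even_links ?n) \<Omega>"
        using cut_nonneg odd_links_subset even_links_subset d by simp_all
      moreover have "0 \<le> ?\<rho>\<^sup>2 / L" using L by simp
      ultimately show ?thesis by linarith
    qed
    then show "?\<rho> - ?\<rho>\<^sup>2 / L \<le> cut_value ?n (netL k L) (netR k) (relay_schedule ?n d) \<Omega>"
      by (simp add: cut_value_relay_schedule)
  qed (use nonneg in auto)
qed

lemma Cn_netL_le: "Cn (2 * k + 1) (netL k L) (netR k) \<le> 2 + 2 * cos (thetaN k)"
proof -
  have "Cn (2 * k + 1) (netL k L) (netR k) \<le> maxz (netR k ` {1..2 * k + 1})"
    using netR_pos_le(1) by (intro Cn_le_max_right) (auto intro: less_imp_le)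
  also have "\<dots> \<le> 2 + 2 * cos (thetaN k)"
  proof (rule maxz_least)
    show "0 \<le> 2 + 2 * cos (thetaN k)" using cos_ge_minus_one[of "thetaN k"] by linarith
  qed (use netR_pos_le(2)[of _ k] in auto)
  finally show ?thesis .
qed

lemma tendsto_Cn_netL:
  assumes "1 \<le> k"
  shows "((\<lambda>L. Cn (2 * k + 1) (netL k L) (netR k)) \<longlongrightarrow> 2 + 2 * cos (thetaN k)) at_top"
proof (rule tendsto_sandwich)
  let ?\<rho> = "2 + 2 * cos (thetaN k)"
  show "((\<lambda>L. ?\<rho> - ?\<rho>\<^sup>2 / L) \<longlongrightarrow> ?\<rho>) at_top"
    by real_asymp
  show "\<forall>\<^sub>F L in at_top. ?\<rho> - ?\<rho>\<^sup>2 / L \<le> Cn (2 * k + 1) (netL k L) (netR k)"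
    using eventually_ge_at_top[of ?\<rho>] by eventually_elim (rule Cn_netL_ge[OF assms])
qed (use Cn_netL_le in auto)

lemma C1_link_netL_netR:
  assumes "1 \<le> j" "j \<le> 2 * k"
  shows "C1_link (netL k L j) (netR k j) = 1"
proof -
  have i: "1 \<le> (j + 1) div 2" "Suc ((j + 1) div 2) \<le> Suc k" using assms by auto
  then show ?thesis
    using C1_link_lcap_rcap[OF thetaN_pos i(1) less_imp_le[OF mult_thetaN_less_pi[OF i(2)]]] assms
    by (simp add: netL_eq netR_eq)
qed

lemma C1_netL:
  assumes "1 \<le> k" "0 < L"
  shows "C1 (2 * k + 1) (netL k L) (netR k) = 1"
  unfolding C1_def
proof (rule Max_eqI)
  show "1 \<in> (\<lambda>i. C1_link (netL k L i) (netR k i)) ` {1..2 * k + 1}"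
    using C1_link_netL_netR[of 1 k L] assms(1) by force
  fix y assume "y \<in> (\<lambda>i. C1_link (netL k L i) (netR k i)) ` {1..2 * k + 1}"
  then obtain j where "j \<in> {1..2 * k + 1}" "y = C1_link (netL k L j) (netR k j)" by auto
  moreover have "C1_link L 1 \<le> 1" using assms(2) by (simp add: C1_link_def)
  ultimately show "y \<le> 1"
    using C1_link_netL_netR[of j k L] by (cases "j = 2 * k + 1") (auto simp: netL_def netR_def)
qed simp

theorem mainTheorem9:
  fixes k n :: nat and \<theta> :: real
  assumes "k \<ge> 1" and "n = 2*k+1" and "\<theta> = 2 * pi / (real n + 2)"
  shows "(\<forall>L. \<forall>j\<in>{1..n-1}. C1_link (netL k L j) (netR k j) = 1)
    \<and> (\<forall>L>0. C1 n (netL k L) (netR k) = 1)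
    \<and> (\<forall>L>0. Cn n (netL k L) (netR k) \<le> netR k 1 \<and> netR k 1 = 2 + 2 * cos \<theta>)
    \<and> ((\<lambda>L. Cn n (netL k L) (netR k)) \<longlongrightarrow> 2 + 2 * cos \<theta>) at_top
    \<and> ((\<lambda>L. C1 n (netL k L) (netR k) / Cn n (netL k L) (netR k))
         \<longlongrightarrow> 1 / (2 + 2 * cos (2 * pi / (real n + 2)))) at_top"
proof -
  have \<theta>: "\<theta> = thetaN k" and n: "n = 2 * k + 1"
    using assms(2,3) by (simp_all add: thetaN_def)
  have Cn_lim: "((\<lambda>L. Cn n (netL k L) (netR k)) \<longlongrightarrow> 2 + 2 * cos \<theta>) at_top"
    using tendsto_Cn_netL[OF assms(1)] by (simp add: n \<theta>)
  have "((\<lambda>L. 1 / Cn n (netL k L) (netR k)) \<longlongrightarrow> 1 / (2 + 2 * cos \<theta>)) at_top"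
    using netR_pos_le(1)[of 1 k] netR_1[OF assms(1)] \<theta>
    by (intro tendsto_divide tendsto_const Cn_lim) auto
  moreover have "\<forall>\<^sub>F L in at_top. 1 / Cn n (netL k L) (netR k) = C1 n (netL k L) (netR k) / Cn n (netL k L) (netR k)"
    using eventually_gt_at_top[of 0] by eventually_elim (use C1_netL[OF assms(1)] n in simp)
  ultimately have ratio_lim: "((\<lambda>L. C1 n (netL k L) (netR k) / Cn n (netL k L) (netR k))
      \<longlongrightarrow> 1 / (2 + 2 * cos \<theta>)) at_top"
    by (rule Lim_transform_eventually)
  show ?thesis
    unfolding assms(3)[symmetric]
    using C1_link_netL_netR C1_netL[OF assms(1)] Cn_netL_le netR_1[OF assms(1)] Cn_lim ratio_lim
    by (simp add: n \<theta>)
qed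

end
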